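(* For each $n\ge1$, the map $\eta\circ\iota$ is a bijection between $\mathcal{T}_n$ (the set of triangles, up to similarity, having exact pedal period $n$) and $\mathcal{W}_n$ (the set of primitive two-dimensional words of dimension $2\times n$ over $\{0,1\}$).
   Context: Let $\Sigma=\{0,1\}$, $\Gamma=\{0,1,2,3\}$. A two-dimensional word of dimension $m\times n$ over $\Sigma$ is a map $\{0,\dots,m-1\}\times\{0,\dots,n-1\}\to\Sigma$; $W^{p\times q}$ is the $pm\times qn$ word with $W^{p\times q}[i,j]=W[i\bmod m,j\bmod n]$; $W$ is periodic if $W=V^{p\times q}$ for nonempty $V$ with $p\ge2$ or $q\ge2$, primitive otherwise. $\mathcal{W}_n$ is the set of primitive $2\times n$ words over $\Sigma$. $\eta$ sends $0\mapsto\begin{bmatrix}0\\1\end{bmatrix}$, $1\mapsto\begin{bmatrix}0\\0\end{bmatrix}$, $2\mapsto\begin{bmatrix}1\\1\end{bmatrix}$, $3\mapsto\begin{bmatrix}1\\0\end{bmatrix}$, extended to $w=w_0\cdots w_{n-1}\in\Gamma^n$ by letting the $j$th column of $\eta(w)$ be $\eta(w_j)$. Triangles up to similarity are sorted normalized angle triples in $C=\{(a,b,c)\in\mathbb{R}^3: a\ge b\ge c>0,\ a+b+c=1\}$ (angles $a\pi,b\pi,c\pi$); $C^*=\{(a,b,c)\in C: a\ne1/2\}$. Regions of $C^*$: $R_0=\{a<1/2\}$, $R_1=\{2a-1\ge2b,\ a>1/2\}$, $R_2=\{2b>2a-1\ge2c,\ a>1/2\}$, $R_3=\{2c>2a-1,\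 a>1/2\}$. Sorted pedal map $P:C^*\to C$: $P(a,b,c)=(1-2c,1-2b,1-2a)$ on $R_0$, $(2a-1,2b,2c)$ on $R_1$, $(2b,2a-1,2c)$ on $R_2$, $(2b,2c,2a-1)$ on $R_3$. $\mathcal{T}_n=\{p\in C: P^j(p)\text{ defined for }0\le j<n,\ P^n(p)=p,\ P^d(p)\ne p\text{ for }1\le d<n\}$. The itinerary $\iota(p)=w_0\cdots w_{n-1}\in\Gamma^n$ of $p\in\mathcal{T}_n$ is defined by $P^j(p)\in R_{w_j}$ for $0\le j<n$. *)

theory Defs
  imports Main Complex_Main
begin

type_synonym triple = "real \<times> real \<times> real"

definition Ctri :: "triple set" where
  "Ctri = {(a,b,c). a \<ge> b \<and> b \<ge> c \<and> c > 0 \<and> a + b + c = 1}"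

definition Cstar :: "triple set" where
  "Cstar = {(a,b,c). (a,b,c) \<in> Ctri \<and> a \<noteq> 1/2}"

definition Reg :: "nat \<Rightarrow> triple set" where
  "Reg k = (if k = 0 then {(a,b,c). (a,b,c) \<in> Cstar \<and> a < 1/2}
     else if k = 1 then {(a,b,c). (a,b,c) \<in> Cstar \<and> 2*a - 1 \<ge> 2*b \<and> a > 1/2}
     else if k = 2 then {(a,b,c). (a,b,c) \<in> Cstar \<and> 2*b > 2*a - 1 \<and> 2*a - 1 \<ge> 2*c \<and> a > 1/2}
     else if k = 3 then {(a,b,c). (a,b,c) \<in> Cstar \<and> 2*c > 2*a - 1 \<and> a > 1/2}
     else {})"

definition Ped :: "triple \<Rightarrow> triple" where
  "Ped p = (case p of (a,b,c) \<Rightarrow>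
     if p \<in> Reg 0 then (1 - 2*c, 1 - 2*b, 1 - 2*a)
     else if p \<in> Reg 1 then (2*a - 1, 2*b, 2*c)
     else if p \<in> Reg 2 then (2*b, 2*a - 1, 2*c)
     else if p \<in> Reg 3 then (2*b, 2*c, 2*a - 1)
     else undefined)"

definition Tset :: "nat \<Rightarrow> triple set" where
  "Tset n = {p \<in> Ctri. (\<forall>j<n. (Ped ^^ j) p \<in> Cstar) \<and> (Ped ^^ n) p = p
                \<and> (\<forall>d. 1 \<le> d \<and> d < n \<longrightarrow> (Ped ^^ d) p \<noteq> p)}"

text \<open>Itinerary (word over Gamma = {0,1,2,3}, as a list of naturals).\<close>
definition itin :: "nat \<Rightarrow> triple \<Rightarrow> nat list" where
  "itin n p = map (\<lambda>j. THE k. k < 4 \<and> (Ped ^^ j) p \<in> Reg k) [0..<n]"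

text \<open>A two-dimensional word of dimension m x n over {0,1} is a list of m rows,
  each a list of length n with entries in {0,1}; entry [i,j] is W ! i ! j.\<close>
definition is_word :: "nat \<Rightarrow> nat \<Rightarrow> nat list list \<Rightarrow> bool" where
  "is_word m n W \<longleftrightarrow> length W = m \<and> (\<forall>r\<in>set W. length r = n \<and> set r \<subseteq> {0,1})"

text \<open>V^(p x q): entry [i,j] is V[i mod m, j mod n].\<close>
definition wpow :: "nat list list \<Rightarrow> nat \<Rightarrow> nat \<Rightarrow> nat list list" where
  "wpow V p q = concat (replicate p (map (\<lambda>r. concat (replicate q r)) V))"

definition periodic :: "nat list list \<Rightarrow> bool" where
  "periodic W \<longleftrightarrow> (\<exists>V m n p q. m \<ge> 1 \<and> n \<ge> 1 \<and> is_word m n V \<and> (p \<ge> 2 \<or> q \<ge> 2)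
                      \<and> W = wpow V p q)"

definition primitive :: "nat list list \<Rightarrow> bool" where
  "primitive W \<longleftrightarrow> \<not> periodic W"

definition Wset :: "nat \<Rightarrow> nat list list set" where
  "Wset n = {W. is_word 2 n W \<and> primitive W}"

definition eta_col :: "nat \<Rightarrow> nat list" where
  "eta_col x = (if x = 0 then [0,1] else if x = 1 then [0,0]
                else if x = 2 then [1,1] else [1,0])"

definition eta :: "nat list \<Rightarrow> nat list list" where
  "eta w = [map (\<lambda>x. eta_col x ! 0) w, map (\<lambda>x. eta_col x ! 1) w]"

end

(*
  Each branch of the sorted pedal map is affine and doubles Euclidean distances. Hence two
  periodic points with the same itinerary coincide, and since moving a periodic point along
  its orbit rotates its itinerary, the itinerary of a point of exact period n is fixed by no
  proper rotation. The letters 1 and 2 both double the smallest angle, so they cannot make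
  up a whole periodic itinerary.

  Conversely, for a word w the composite of the inverse branches along w is a contraction
  of the closed sorted simplex, and its fixed point spans a periodic backward orbit. When w
  contains a letter 0 or 3, each boundary case (largest angle pi, smallest angle 0, equal
  angles in the wrong place) would propagate around the whole orbit and force an impossible
  itinerary; so the orbit stays in the open regions and realises w.

  On the word side, eta sends exactly the letters 1 and 2 to columns with equal entries, and
  turns rotations of w into column shifts of eta w. So eta w is primitive iff w avoids both
  degeneracies.
*)
theory Submission
  imports Defs "HOL-Analysis.Elementary_Metric_Spaces"
begin

section \<open>Branches of the sorted pedal map\<close>

definition pedal_branch :: "nat \<Rightarrow> triple \<Rightarrow> triple" where
  "pedal_branch k = (\<lambda>(a, b, c).
     if k = 0 then (1 - 2*c, 1 - 2*b, 1 - 2*a)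
     else if k = 1 then (2*a - 1, 2*b, 2*c)
     else if k = 2 then (2*b, 2*a - 1, 2*c)
     else (2*b, 2*c, 2*a - 1))"

definition pedal_branch_inv :: "nat \<Rightarrow> triple \<Rightarrow> triple" where
  "pedal_branch_inv k = (\<lambda>(a, b, c).
     if k = 0 then ((1 - c)/2, (1 - b)/2, (1 - a)/2)
     else if k = 1 then ((a + 1)/2, b/2, c/2)
     else if k = 2 then ((b + 1)/2, a/2, c/2)
     else ((c + 1)/2, a/2, b/2))"

lemma pedal_branch_inv_inverse [simp]: "pedal_branch k (pedal_branch_inv k p) = p"
  by (cases p) (auto simp: pedal_branch_def pedal_branch_inv_def field_simps)

lemma Reg_imp_less_4: "p \<in> Reg k \<Longrightarrow> k < 4"
  by (auto simp: Reg_def split: if_splits)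

lemma Reg_subset_Cstar: "Reg k \<subseteq> Cstar"
  by (auto simp: Reg_def)

lemma Reg_disjoint: "p \<in> Reg k \<Longrightarrow> p \<in> Reg l \<Longrightarrow> k = l"
  by (cases p) (auto simp: Reg_def Cstar_def Ctri_def split: if_splits)

lemma Cstar_imp_Reg: "p \<in> Cstar \<Longrightarrow> p \<in> Reg 0 \<or> p \<in> Reg 1 \<or> p \<in> Reg 2 \<or> p \<in> Reg 3"
  by (cases p) (auto simp: Reg_def Cstar_def)

definition region :: "triple \<Rightarrow> nat" where
  "region p = (THE k. k < 4 \<and> p \<in> Reg k)"

lemma region_eqI: "p \<in> Reg k \<Longrightarrow> region p = k"
  unfolding region_def by (rule the_equality) (auto intro: Reg_imp_less_4 Reg_disjoint)

lemma Reg_region: "p \<in> Cstar \<Longrightarrow> p \<in> Reg (region p)"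
  using Cstar_imp_Reg region_eqI by metis

lemma itin_conv_region: "itin n p = map (\<lambda>j. region ((Ped ^^ j) p)) [0..<n]"
  by (simp add: itin_def region_def)

lemma Ped_Reg:
  assumes p: "p \<in> Reg k"
  shows "Ped p = pedal_branch k p"
proof -
  have "p \<in> Reg l \<longleftrightarrow> l = k" for l
    using p Reg_disjoint by blast
  with Reg_imp_less_4[OF p] show ?thesis
    by (cases p) (auto simp: Ped_def pedal_branch_def)
qed

section \<open>Periodic points and their itineraries\<close>

lemma dist_triple: "dist (a, b, c) (a', b', c') = sqrt ((a - a')\<^sup>2 + (b - b')\<^sup>2 + (c - c')\<^sup>2)"
  by (simp add: dist_Pair_Pair dist_real_def add.assoc)

lemma dist_pedal_branch: "dist (pedal_branch k x) (pedal_branch k y) = 2 * dist x y"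
proof -
  obtain a b c a' b' c' where x: "x = (a, b, c)" and y: "y = (a', b', c')"
    by (cases x, cases y)
  have "dist (pedal_branch k x) (pedal_branch k y) = sqrt (4 * ((a - a')\<^sup>2 + (b - b')\<^sup>2 + (c - c')\<^sup>2))"
    by (cases "k = 0 \<or> k = 1 \<or> k = 2")
      (auto simp: x y pedal_branch_def dist_triple power2_eq_square algebra_simps)
  then show ?thesis
    unfolding x y dist_triple real_sqrt_mult by simp
qed

lemma dist_pedal_branch_inv: "dist (pedal_branch_inv k x) (pedal_branch_inv k y) = dist x y / 2"
  using dist_pedal_branch[of k "pedal_branch_inv k x" "pedal_branch_inv k y"] by simp

lemma dist_funpow_Ped:
  assumes "\<And>j. j < m \<Longrightarrow> (Ped ^^ j) p \<in> Cstar \<and> (Ped ^^ j) q \<in> Cstar"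
    and "\<And>j. j < m \<Longrightarrow> region ((Ped ^^ j) p) = region ((Ped ^^ j) q)"
  shows "dist ((Ped ^^ m) p) ((Ped ^^ m) q) = 2 ^ m * dist p q"
  using assms
proof (induction m)
  case (Suc m)
  let ?k = "region ((Ped ^^ m) p)"
  have "(Ped ^^ m) p \<in> Reg ?k" "(Ped ^^ m) q \<in> Reg ?k"
    using Reg_region Suc.prems[of m] by simp_all metis
  then have "dist ((Ped ^^ Suc m) p) ((Ped ^^ Suc m) q) = 2 * dist ((Ped ^^ m) p) ((Ped ^^ m) q)"
    by (simp add: Ped_Reg dist_pedal_branch)
  with Suc show ?case
    by simp
qed simp

lemma periodic_points_eq_if_itin_eq:
  assumes "0 < n" "(Ped ^^ n) p = p" "(Ped ^^ n) q = q"
    and "\<And>j. j < n \<Longrightarrow> (Ped ^^ j) p \<in> Cstar \<and> (Ped ^^ j) q \<in> Cstar"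
    and "itin n p = itin n q"
  shows "p = q"
proof -
  have "region ((Ped ^^ j) p) = region ((Ped ^^ j) q)" if "j < n" for j
    using arg_cong[OF assms(5), of "\<lambda>w. w ! j"] that by (simp add: itin_conv_region)
  with assms have "dist p q = 2 ^ n * dist p q"
    using dist_funpow_Ped[of n p q] by simp
  moreover have "(1::real) < 2 ^ n"
    using \<open>0 < n\<close> by simp
  ultimately show "p = q"
    by simp
qed

lemma Tset_funpow_Cstar: "p \<in> Tset n \<Longrightarrow> 0 < n \<Longrightarrow> (Ped ^^ j) p \<in> Cstar"
  using funpow_mod_eq[where f = Ped and n = n and x = p and m = j, symmetric] by (simp add: Tset_def)

lemma itin_funpow:
  assumes "(Ped ^^ n) p = p"
  shows "itin n ((Ped ^^ d) p) = rotate d (itin n p)"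
proof (rule nth_equalityI)
  fix j assume "j < length (itin n ((Ped ^^ d) p))"
  then have "j < n" by (simp add: itin_conv_region)
  have "(Ped ^^ j) ((Ped ^^ d) p) = (Ped ^^ (j + d)) p"
    by (simp add: funpow_add)
  also have "\<dots> = (Ped ^^ ((d + j) mod n)) p"
    using funpow_mod_eq[OF assms, of "d + j"] by (simp add: add.commute)
  finally show "itin n ((Ped ^^ d) p) ! j = rotate d (itin n p) ! j"
    using \<open>j < n\<close> by (simp add: itin_conv_region nth_rotate)
qed (simp add: itin_conv_region)

lemma inj_on_itin_Tset: "0 < n \<Longrightarrow> inj_on (itin n) (Tset n)"
  by (rule inj_onI, rule periodic_points_eq_if_itin_eq) (auto simp: Tset_def)

lemma third_pedal_branch_12: "k \<in> {1, 2} \<Longrightarrow> snd (snd (pedal_branch k x)) = 2 * snd (snd x)"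
  by (cases x) (auto simp: pedal_branch_def)

lemma itin_Tset_not_subset_12:
  assumes "p \<in> Tset n" "0 < n"
  shows "\<not> set (itin n p) \<subseteq> {1, 2}"
proof
  assume letters: "set (itin n p) \<subseteq> {1, 2}"
  have "snd (snd ((Ped ^^ j) p)) = 2 ^ j * snd (snd p)" if "j \<le> n" for j
    using that
  proof (induction j)
    case (Suc j)
    let ?k = "region ((Ped ^^ j) p)"
    have "?k \<in> set (itin n p)"
      using Suc.prems by (auto simp: itin_conv_region)
    moreover have "(Ped ^^ j) p \<in> Reg ?k"
      using Reg_region Tset_funpow_Cstar assms by blast
    ultimately show ?case
      using letters Suc by (auto simp: Ped_Reg third_pedal_branch_12)
  qed simp
  from this[of n] assms have "snd (snd p) = 2 ^ n * snd (snd p)"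
    by (simp add: Tset_def)
  moreover have "0 < snd (snd p)" "(1::real) < 2 ^ n"
    using assms by (auto simp: Tset_def Ctri_def)
  ultimately show False
    by simp
qed

definition primitive_itineraries :: "nat \<Rightarrow> nat list set" where
  "primitive_itineraries n = {w. length w = n \<and> set w \<subseteq> {..<4} \<and> \<not> set w \<subseteq> {1, 2}
     \<and> (\<forall>d. 0 < d \<and> d < n \<longrightarrow> rotate d w \<noteq> w)}"

lemma set_itin_Tset:
  assumes "p \<in> Tset n" "0 < n"
  shows "set (itin n p) \<subseteq> {..<4}"
proof -
  have "region ((Ped ^^ j) p) < 4" for j
    using Reg_imp_less_4[OF Reg_region[OF Tset_funpow_Cstar[OF assms]]] .
  then show ?thesis
    by (auto simp: itin_conv_region)
qed

lemma rotate_itin_Tset_neq: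
  assumes "p \<in> Tset n" "0 < d" "d < n"
  shows "rotate d (itin n p) \<noteq> itin n p"
proof
  have "0 < n" and periodic: "(Ped ^^ n) p = p"
    using assms by (simp_all add: Tset_def)
  then have shifted_periodic: "(Ped ^^ n) ((Ped ^^ d) p) = (Ped ^^ d) p"
    by (metis add.commute comp_apply funpow_add)
  have "(Ped ^^ j) ((Ped ^^ d) p) \<in> Cstar" for j
    using Tset_funpow_Cstar[OF assms(1) \<open>0 < n\<close>, of "j + d"] by (simp add: funpow_add)
  moreover assume "rotate d (itin n p) = itin n p"
  ultimately have "(Ped ^^ d) p = p"
    using periodic_points_eq_if_itin_eq[OF \<open>0 < n\<close> shifted_periodic periodic]
      Tset_funpow_Cstar[OF assms(1) \<open>0 < n\<close>] itin_funpow[OF periodic] by simp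
  with assms show False
    by (simp add: Tset_def)
qed

lemma itin_in_primitive_itineraries:
  "p \<in> Tset n \<Longrightarrow> 0 < n \<Longrightarrow> itin n p \<in> primitive_itineraries n"
  using set_itin_Tset itin_Tset_not_subset_12 rotate_itin_Tset_neq
  by (simp add: primitive_itineraries_def itin_conv_region)

section \<open>Realising primitive itineraries\<close>

definition sorted_simplex :: "triple set" where
  "sorted_simplex = {(a, b, c). b \<le> a \<and> c \<le> b \<and> 0 \<le> c \<and> a + b + c = 1}"

definition isosceles :: "triple \<Rightarrow> bool" where
  "isosceles = (\<lambda>(a, b, c). a = b \<or> b = c)"

definition equilateral :: "triple \<Rightarrow> bool" where
  "equilateral = (\<lambda>(a, b, c). a = b \<and> b = c)"

lemma closed_sorted_simplex: "closed sorted_simplex"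
proof -
  have "sorted_simplex = {x. fst (snd x) \<le> fst x} \<inter> {x. snd (snd x) \<le> fst (snd x)}
      \<inter> {x. 0 \<le> snd (snd x)} \<inter> {x. fst x + fst (snd x) + snd (snd x) = 1}"
    by (auto simp: sorted_simplex_def)
  moreover have "closed \<dots>"
    by (intro closed_Int closed_Collect_le closed_Collect_eq continuous_intros)
  ultimately show ?thesis
    by simp
qed

lemma pedal_branch_inv_sorted_simplex:
  "x \<in> sorted_simplex \<Longrightarrow> pedal_branch_inv k x \<in> sorted_simplex"
  by (cases x) (auto simp: sorted_simplex_def pedal_branch_inv_def field_simps)

lemma foldr_pedal_branch_inv_sorted_simplex:
  "x \<in> sorted_simplex \<Longrightarrow> foldr pedal_branch_inv ws x \<in> sorted_simplex"
  by (induction ws) (simp_all add: pedal_branch_inv_sorted_simplex)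

lemma dist_foldr_pedal_branch_inv:
  "dist (foldr pedal_branch_inv ws x) (foldr pedal_branch_inv ws y) = dist x y / 2 ^ length ws"
  by (induction ws) (simp_all add: dist_pedal_branch_inv)

lemma foldr_pedal_branch_inv_fixed_point:
  assumes "ws \<noteq> []"
  obtains x where "x \<in> sorted_simplex" "foldr pedal_branch_inv ws x = x"
proof -
  have "\<exists>!x\<in>sorted_simplex. foldr pedal_branch_inv ws x = x"
  proof (rule Banach_fix[where c = "1/2"])
    show "complete sorted_simplex"
      using closed_sorted_simplex by (simp add: complete_eq_closed)
    have "(1, 0, 0) \<in> sorted_simplex"
      by (simp add: sorted_simplex_def)
    then show "sorted_simplex \<noteq> {}"
      by blast
    show "foldr pedal_branch_inv ws ` sorted_simplex \<subseteq> sorted_simplex"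
      using foldr_pedal_branch_inv_sorted_simplex by blast
    fix x y :: triple
    have "(2::real) \<le> 2 ^ length ws"
      using assms by (cases ws) auto
    then have "dist x y / 2 ^ length ws \<le> 1/2 * dist x y"
      using divide_left_mono[of 2 "2 ^ length ws" "dist x y"] by simp
    then show "dist (foldr pedal_branch_inv ws x) (foldr pedal_branch_inv ws y) \<le> 1/2 * dist x y"
      by (simp add: dist_foldr_pedal_branch_inv)
  qed simp_all
  with that show ?thesis
    by blast
qed

lemma fst_pedal_branch_inv_eq_1:
  "y \<in> sorted_simplex \<Longrightarrow> fst (pedal_branch_inv k y) = 1 \<Longrightarrow> k = 1 \<and> fst y = 1"
  by (cases y) (auto simp: sorted_simplex_def pedal_branch_inv_def split: if_splits)

lemma third_pedal_branch_inv_eq_0: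
  "y \<in> sorted_simplex \<Longrightarrow> fst y < 1 \<Longrightarrow> snd (snd (pedal_branch_inv k y)) = 0
    \<Longrightarrow> k \<in> {1, 2} \<and> snd (snd y) = 0"
  by (cases y) (auto simp: sorted_simplex_def pedal_branch_inv_def split: if_splits)

lemma isosceles_pedal_branch_inv:
  "y \<in> sorted_simplex \<Longrightarrow> fst y < 1 \<Longrightarrow> isosceles (pedal_branch_inv k y) \<Longrightarrow> isosceles y"
  by (cases y) (auto simp: sorted_simplex_def pedal_branch_inv_def isosceles_def split: if_splits)

lemma equilateral_pedal_branch_inv:
  "y \<in> sorted_simplex \<Longrightarrow> fst y < 1 \<Longrightarrow> equilateral (pedal_branch_inv k y)
    \<Longrightarrow> k = 0 \<and> equilateral y"
  by (cases y) (auto simp: sorted_simplex_def pedal_branch_inv_def equilateral_def split: if_splits)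

lemma isosceles_pedal_branch_inv_2:
  "y \<in> sorted_simplex \<Longrightarrow> fst y < 1 \<Longrightarrow> isosceles (pedal_branch_inv 2 y) \<Longrightarrow> equilateral y"
  by (cases y) (auto simp: sorted_simplex_def pedal_branch_inv_def isosceles_def equilateral_def)

lemma isosceles_pedal_branch_inv_3:
  "y \<in> sorted_simplex \<Longrightarrow> fst y < 1 \<Longrightarrow> isosceles (pedal_branch_inv 3 y) \<Longrightarrow> fst y = fst (snd y)"
  by (cases y) (auto simp: sorted_simplex_def pedal_branch_inv_def isosceles_def)

lemma pedal_branch_inv_Reg:
  assumes "y \<in> sorted_simplex" "0 < snd (snd y)" "k < 4"
    and "k = 2 \<Longrightarrow> fst (snd y) < fst y" and "k = 3 \<Longrightarrow> snd (snd y) < fst (snd y)"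
  shows "pedal_branch_inv k y \<in> Reg k"
proof -
  have "k = 0 \<or> k = 1 \<or> k = 2 \<or> k = 3"
    using \<open>k < 4\<close> by arith
  with assms show ?thesis
    by (cases y) (auto simp: sorted_simplex_def pedal_branch_inv_def Reg_def Cstar_def Ctri_def field_simps)
qed

locale pedal_backward_orbit =
  fixes n :: nat and letter :: "nat \<Rightarrow> nat" and x :: "nat \<Rightarrow> triple"
  assumes period_pos: "0 < n"
    and orbit_periodic: "x (j + n) = x j"
    and orbit_simplex: "x j \<in> sorted_simplex"
    and orbit_step: "x j = pedal_branch_inv (letter j) (x (Suc j))"
    and letter_less_4: "letter j < 4"
    and letter_not_12: "\<exists>i. letter i \<notin> {1, 2}"
begin

lemma orbit_invariant:
  assumes "P (x i)" and step: "\<And>j. P (x j) \<Longrightarrow> P (x (Suc j))"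
  shows "P (x j)"
proof -
  have forward: "P (x (i + t))" for t
    by (induction t) (simp_all add: assms)
  have periodic: "x (j + n * t) = x j" for t
  proof (induction t)
    case (Suc t)
    then show ?case
      using orbit_periodic[of "j + n * t"] by (simp add: algebra_simps)
  qed simp
  have "i \<le> n * i"
    using period_pos by simp
  then have "j + n * i = i + (j + n * i - i)"
    by linarith
  then show ?thesis
    using forward periodic by metis
qed

lemma fst_orbit_less_1: "fst (x j) < 1"
proof (rule ccontr)
  have step: "fst (x m) = 1 \<Longrightarrow> letter m = 1 \<and> fst (x (Suc m)) = 1" for m
    using fst_pedal_branch_inv_eq_1[OF orbit_simplex] orbit_step by metis
  assume "\<not> fst (x j) < 1"
  then have "fst (x j) = 1"
    using orbit_simplex[of j] by (cases "x j") (auto simp: sorted_simplex_def)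
  then have "fst (x m) = 1" for m
    by (rule orbit_invariant[where P = "\<lambda>y. fst y = 1"]) (use step in blast)
  then show False
    using step letter_not_12 by blast
qed

lemma third_orbit_pos: "0 < snd (snd (x j))"
proof (rule ccontr)
  have step: "snd (snd (x m)) = 0 \<Longrightarrow> letter m \<in> {1, 2} \<and> snd (snd (x (Suc m))) = 0" for m
    using third_pedal_branch_inv_eq_0[OF orbit_simplex fst_orbit_less_1] orbit_step by metis
  assume "\<not> 0 < snd (snd (x j))"
  then have "snd (snd (x j)) = 0"
    using orbit_simplex[of j] by (cases "x j") (auto simp: sorted_simplex_def)
  then have "snd (snd (x m)) = 0" for m
    by (rule orbit_invariant[where P = "\<lambda>y. snd (snd y) = 0"]) (use step in blast)
  then show False
    using step letter_not_12 by blast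
qed

lemma isosceles_orbit: "isosceles (x i) \<Longrightarrow> isosceles (x j)"
  by (erule orbit_invariant[where P = isosceles])
    (metis isosceles_pedal_branch_inv orbit_simplex fst_orbit_less_1 orbit_step)

lemma equilateral_orbit_imp_letter_0:
  assumes "equilateral (x i)"
  shows "letter j = 0"
proof -
  have step: "equilateral (x m) \<Longrightarrow> letter m = 0 \<and> equilateral (x (Suc m))" for m
    using equilateral_pedal_branch_inv[OF orbit_simplex fst_orbit_less_1] orbit_step by metis
  have "equilateral (x m)" for m
    using assms by (rule orbit_invariant[where P = equilateral]) (use step in blast)
  then show ?thesis
    using step by blast
qed

lemma orbit_Reg: "x j \<in> Reg (letter j)"
proof -
  let ?y = "x (Suc j)"
  have y: "?y \<in> sorted_simplex" "fst ?y < 1"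
    using orbit_simplex fst_orbit_less_1 by blast+
  have "fst (snd ?y) < fst ?y" if "letter j = 2"
  proof (rule ccontr)
    assume "\<not> fst (snd ?y) < fst ?y"
    then have "isosceles ?y"
      using y by (cases ?y) (auto simp: sorted_simplex_def isosceles_def)
    then have "isosceles (pedal_branch_inv 2 ?y)"
      using isosceles_orbit orbit_step[of j] that by metis
    then have "letter j = 0"
      using isosceles_pedal_branch_inv_2[OF y] equilateral_orbit_imp_letter_0 by blast
    with that show False
      by simp
  qed
  moreover have "snd (snd ?y) < fst (snd ?y)" if "letter j = 3"
  proof (rule ccontr)
    assume "\<not> snd (snd ?y) < fst (snd ?y)"
    then have "snd (snd ?y) = fst (snd ?y)"
      using y by (cases ?y) (auto simp: sorted_simplex_def)
    moreover from this have "isosceles (pedal_branch_inv 3 ?y)"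
      using isosceles_orbit[of "Suc j" j] orbit_step[of j] that by (cases ?y) (auto simp: isosceles_def)
    ultimately have "equilateral ?y"
      using isosceles_pedal_branch_inv_3[OF y] by (cases ?y) (auto simp: equilateral_def)
    then have "letter j = 0"
      by (rule equilateral_orbit_imp_letter_0)
    with that show False
      by simp
  qed
  ultimately show ?thesis
    using pedal_branch_inv_Reg[OF y(1) third_orbit_pos letter_less_4] orbit_step by metis
qed

lemma funpow_Ped_orbit: "(Ped ^^ j) (x 0) = x j"
proof (induction j)
  case (Suc j)
  have "Ped (x j) = x (Suc j)"
    using Ped_Reg[OF orbit_Reg] orbit_step by (metis pedal_branch_inv_inverse)
  with Suc show ?case
    by simp
qed simp

end

lemma foldr_drop_mod_Suc:
  assumes "foldr f ws z = z" "ws \<noteq> []"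
  shows "foldr f (drop (j mod length ws) ws) z
    = f (ws ! (j mod length ws)) (foldr f (drop (Suc j mod length ws) ws) z)"
proof -
  let ?i = "j mod length ws"
  have i: "?i < length ws"
    using assms(2) by simp
  have "foldr f (drop (Suc ?i) ws) z = foldr f (drop (Suc j mod length ws) ws) z"
  proof (cases "Suc ?i < length ws")
    case True
    then show ?thesis
      by (simp add: mod_Suc)
  next
    case False
    with i have "Suc ?i = length ws" "Suc j mod length ws = 0"
      by (simp_all add: mod_Suc)
    with assms(1) show ?thesis
      by simp
  qed
  moreover have "drop ?i ws = ws ! ?i # drop (Suc ?i) ws"
    using i by (rule Cons_nth_drop_Suc[symmetric])
  ultimately show ?thesis
    by simp
qed

lemma pedal_backward_orbit_exists:
  assumes len: "length w = n" and letters: "set w \<subseteq> {..<4}" "\<not> set w \<subseteq> {1, 2}"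
  obtains x where "pedal_backward_orbit n (\<lambda>j. w ! (j mod n)) x"
proof -
  from letters(2) obtain a where a: "a \<in> set w" "a \<notin> {1, 2}"
    by blast
  then obtain i where "i < n" "w ! i = a"
    by (auto simp: in_set_conv_nth len)
  with a have i: "i < n" "w ! i \<notin> {1, 2}"
    by simp_all
  then have "w \<noteq> []"
    using len by auto
  then obtain z where z: "z \<in> sorted_simplex" "foldr pedal_branch_inv w z = z"
    by (rule foldr_pedal_branch_inv_fixed_point)
  define x where "x j = foldr pedal_branch_inv (drop (j mod n) w) z" for j
  have "pedal_backward_orbit n (\<lambda>j. w ! (j mod n)) x"
  proof
    show "0 < n" "x (j + n) = x j" "x j \<in> sorted_simplex" for j
      using i z by (simp_all add: x_def foldr_pedal_branch_inv_sorted_simplex)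
    show "x j = pedal_branch_inv (w ! (j mod n)) (x (Suc j))" for j
      unfolding x_def len[symmetric] by (rule foldr_drop_mod_Suc[OF z(2) \<open>w \<noteq> []\<close>])
    have "w ! (j mod n) \<in> set w" for j
      using i(1) len by simp
    then show "w ! (j mod n) < 4" for j
      using letters(1) by auto
    show "\<exists>i. w ! (i mod n) \<notin> {1, 2}"
      using i by (intro exI[of _ i]) simp
  qed
  with that show ?thesis
    by blast
qed

lemma primitive_itinerary_realized:
  assumes w: "w \<in> primitive_itineraries n"
  obtains p where "p \<in> Tset n" "itin n p = w"
proof -
  have len: "length w = n"
    using w by (simp add: primitive_itineraries_def)
  from w have "set w \<subseteq> {..<4}" "\<not> set w \<subseteq> {1, 2}"
    by (simp_all add: primitive_itineraries_def)
  with len obtain x where "pedal_backward_orbit n (\<lambda>j. w ! (j mod n)) x"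
    by (rule pedal_backward_orbit_exists)
  then interpret pedal_backward_orbit n "\<lambda>j. w ! (j mod n)" x .
  have period: "(Ped ^^ n) (x 0) = x 0"
    using orbit_periodic[of 0] by (simp add: funpow_Ped_orbit)
  have itin: "itin n (x 0) = w"
    by (rule nth_equalityI) (simp_all add: itin_conv_region funpow_Ped_orbit region_eqI[OF orbit_Reg] len)
  have "x 0 \<in> Tset n"
    unfolding Tset_def
  proof (intro CollectI conjI allI impI notI)
    show "(Ped ^^ j) (x 0) \<in> Cstar" for j
      using orbit_Reg[of j] Reg_subset_Cstar unfolding funpow_Ped_orbit by blast
    from this[of 0] show "x 0 \<in> Ctri"
      by (auto simp: Cstar_def)
    show "(Ped ^^ n) (x 0) = x 0"
      by (rule period)
    fix d assume d: "1 \<le> d \<and> d < n" and "(Ped ^^ d) (x 0) = x 0"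
    then have "rotate d w = w"
      using itin_funpow[OF period, of d] itin by simp
    with w d show False
      by (simp add: primitive_itineraries_def)
  qed
  with itin that show ?thesis
    by blast
qed

lemma bij_betw_itin:
  assumes "0 < n"
  shows "bij_betw (itin n) (Tset n) (primitive_itineraries n)"
  unfolding bij_betw_def
proof
  show "inj_on (itin n) (Tset n)"
    using assms by (rule inj_on_itin_Tset)
  show "itin n ` Tset n = primitive_itineraries n"
  proof (intro subset_antisym image_subsetI subsetI)
    show "itin n p \<in> primitive_itineraries n" if "p \<in> Tset n" for p
      using that assms by (rule itin_in_primitive_itineraries)
    fix w assume "w \<in> primitive_itineraries n"
    then obtain p where "p \<in> Tset n" "itin n p = w"
      by (rule primitive_itinerary_realized)
    then show "w \<in> itin n ` Tset n"
      by blast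
  qed
qed

section \<open>Two-dimensional words\<close>

lemma rotate_concat_replicate: "rotate (length u) (concat (replicate k u)) = concat (replicate k u)"
proof (cases k)
  case (Suc k')
  have "rotate (length u) (u @ concat (replicate k' u)) = concat (replicate k' u) @ u"
    by (rule rotate_append)
  also have "\<dots> = concat (replicate k' u @ [u])"
    by simp
  finally show ?thesis
    by (simp add: Suc replicate_append_same)
qed simp

lemma rotate_fixed_imp_concat_replicate:
  assumes "0 < d" "d < length w" "rotate d w = w"
  obtains k u where "1 < k" "w = concat (replicate k u)"
proof -
  have "take d w @ drop d w = drop d w @ take d w"
    using rotate_append[of "take d w" "drop d w"] assms by simp
  moreover have "take d w \<noteq> []" "drop d w \<noteq> []"
    using assms by auto
  ultimately obtain k u where "1 < k" "concat (replicate k u) = take d w @ drop d w"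
    using comm_append_is_replicate by metis
  then show ?thesis
    by (metis that append_take_drop_id)
qed

lemma eta_rows_eq_iff: "eta w ! 0 = eta w ! 1 \<longleftrightarrow> set w \<subseteq> {1, 2}"
proof -
  have "eta_col x ! 0 = eta_col x ! 1 \<longleftrightarrow> x \<in> {1, 2}" for x
    by (simp add: eta_col_def)
  then show ?thesis
    unfolding eta_def by auto
qed

lemma eta_rotate: "eta (rotate d w) = map (rotate d) (eta w)"
  by (simp add: eta_def rotate_map)

lemma eta_concat_replicate: "eta (concat (replicate k u)) = wpow (eta u) 1 k"
  by (simp add: eta_def wpow_def map_concat)

lemma is_word_eta: "is_word 2 (length w) (eta w)"
proof -
  have "eta_col x ! 0 \<in> {0, 1}" "eta_col x ! 1 \<in> {0, 1}" for x
    by (simp_all add: eta_col_def)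
  then show ?thesis
    by (simp add: is_word_def eta_def image_subset_iff)
qed

lemma eta_eq_iff:
  assumes "set w \<subseteq> {..<4}" "set v \<subseteq> {..<4}"
  shows "eta w = eta v \<longleftrightarrow> w = v"
proof
  define col where "col x = (eta_col x ! 0, eta_col x ! 1)" for x
  have "inj_on col {..<4}"
    by (auto simp: inj_on_def col_def eta_col_def less_Suc_eq numeral_eq_Suc)
  then have inj: "inj_on col (set w \<union> set v)"
    using assms by (intro inj_on_subset[OF \<open>inj_on col {..<4}\<close>]) auto
  have "map col u = zip (eta u ! 0) (eta u ! 1)" for u
    by (simp add: col_def eta_def zip_map_map zip_same_conv_map)
  moreover assume "eta w = eta v"
  ultimately have "map col w = map col v"
    by metis
  with inj show "w = v"
    by (simp add: inj_on_map_eq_map)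
qed simp

lemma is_word_2_imp_eta:
  assumes "is_word 2 n W"
  obtains w where "length w = n" "set w \<subseteq> {..<4}" "eta w = W"
proof -
  obtain r0 r1 where W: "W = [r0, r1]"
    using assms by (auto simp: is_word_def numeral_2_eq_2 length_Suc_conv)
  with assms have r: "length r0 = n" "length r1 = n" "set r0 \<subseteq> {0, 1}" "set r1 \<subseteq> {0, 1}"
    by (simp_all add: is_word_def)
  have bits: "fst p \<in> {0, 1} \<and> snd p \<in> {0, 1}" if "p \<in> set (zip r0 r1)" for p
    using r set_zip_leftD[of "fst p" "snd p" r0 r1] set_zip_rightD[of "fst p" "snd p" r0 r1] that
    by auto
  define letter where "letter p = 2 * fst p + (1 - snd p)" for p :: "nat \<times> nat"
  have letter: "eta_col (letter p) = [fst p, snd p]" "letter p < 4" if "p \<in> set (zip r0 r1)" for p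
    using bits[OF that] by (auto simp: letter_def eta_col_def)
  define w where "w = map letter (zip r0 r1)"
  have "map (\<lambda>x. eta_col x ! i) w = map (\<lambda>p. [fst p, snd p] ! i) (zip r0 r1)" for i
    unfolding w_def map_map by (intro map_cong) (simp_all add: letter)
  then have "eta w = W"
    using r by (simp add: eta_def W zip_map_fst_snd)
  moreover have "set w \<subseteq> {..<4}" "length w = n"
    using r letter(2) by (auto simp: w_def)
  ultimately show ?thesis
    using that by blast
qed

lemma length_wpow: "length (wpow V p q) = p * length V"
  by (simp add: wpow_def length_concat sum_list_replicate)

lemma periodicI:
  "1 \<le> m \<Longrightarrow> 1 \<le> k \<Longrightarrow> is_word m k V \<Longrightarrow> 2 \<le> p \<or> 2 \<le> q \<Longrightarrow> W = wpow V p q \<Longrightarrow> periodic W"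
  unfolding periodic_def by blast

lemma periodic_eta_imp:
  assumes "periodic (eta w)" "set w \<subseteq> {..<4}"
  shows "set w \<subseteq> {1, 2} \<or> (\<exists>d. 0 < d \<and> d < length w \<and> rotate d w = w)"
proof -
  from assms(1) obtain V m k p q where V: "1 \<le> m" "1 \<le> k" "is_word m k V"
    and pq: "2 \<le> p \<or> 2 \<le> q" and W: "eta w = wpow V p q"
    unfolding periodic_def by blast
  have "p * m = 2"
    using arg_cong[OF W, of length] V(3) by (simp add: length_wpow is_word_def eta_def)
  then have "m dvd 2"
    by (metis dvd_triv_right)
  then have "m \<le> 2"
    by (rule dvd_imp_le) simp
  with V(1) have "m = 1 \<or> m = 2"
    by linarith
  with \<open>p * m = 2\<close> have "p = 2 \<and> m = 1 \<or> p = 1 \<and> m = 2"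
    by auto
  then show ?thesis
  proof (elim disjE conjE)
    assume "p = 2" "m = 1"
    with V(3) obtain r where "V = [r]"
      by (auto simp: is_word_def length_Suc_conv)
    with W \<open>p = 2\<close> have "eta w ! 0 = eta w ! 1"
      by (simp add: wpow_def numeral_2_eq_2)
    then show ?thesis
      using eta_rows_eq_iff by blast
  next
    assume "p = 1" "m = 2"
    with pq have "2 \<le> q"
      by simp
    have rows: "length r = k" if "r \<in> set V" for r
      using V(3) that by (simp add: is_word_def)
    have "rotate k (concat (replicate q r)) = concat (replicate q r)" if "r \<in> set V" for r
      using rotate_concat_replicate[of r q] rows[OF that] by simp
    then have "map (rotate k) (eta w) = eta w"
      by (simp add: W \<open>p = 1\<close> wpow_def)
    then have "rotate k w = w"
      using eta_eq_iff[of "rotate k w" w] assms(2) by (simp add: eta_rotate)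
    moreover have "length w = q * k"
      using arg_cong[OF W, of "\<lambda>W. length (hd W)"] V(3) \<open>p = 1\<close> \<open>m = 2\<close>
      by (auto simp: eta_def wpow_def is_word_def length_concat sum_list_replicate length_Suc_conv numeral_2_eq_2)
    ultimately show ?thesis
      using V(2) \<open>2 \<le> q\<close> by (intro disjI2 exI[of _ k]) simp
  qed
qed

lemma periodic_eta_if:
  assumes "w \<noteq> []" "set w \<subseteq> {1, 2} \<or> (\<exists>d. 0 < d \<and> d < length w \<and> rotate d w = w)"
  shows "periodic (eta w)"
  using assms(2)
proof
  assume "set w \<subseteq> {1, 2}"
  then have "eta w ! 0 = eta w ! 1"
    using eta_rows_eq_iff by blast
  moreover obtain r r' where "eta w = [r, r']"
    by (simp add: eta_def)
  ultimately have r: "eta w = [r, r]"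
    by simp
  have "is_word 1 (length w) [r]"
    using is_word_eta[of w] by (simp add: is_word_def r)
  moreover have "eta w = wpow [r] 2 1"
    by (simp add: r wpow_def numeral_2_eq_2)
  ultimately show ?thesis
    using assms(1) by (intro periodicI[of 1 "length w" "[r]" 2]) (auto simp: Suc_le_eq)
next
  assume "\<exists>d. 0 < d \<and> d < length w \<and> rotate d w = w"
  then obtain d where "0 < d" "d < length w" "rotate d w = w"
    by blast
  then obtain k u where "1 < k" "w = concat (replicate k u)"
    by (rule rotate_fixed_imp_concat_replicate)
  moreover from this have "u \<noteq> []"
    using assms(1) by auto
  ultimately show ?thesis
    using is_word_eta[of u]
    by (intro periodicI[of 2 "length u" "eta u" 1 k]) (auto simp: eta_concat_replicate Suc_le_eq)
qed

lemma eta_in_Wset_iff: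
  assumes "length w = n" "0 < n" "set w \<subseteq> {..<4}"
  shows "eta w \<in> Wset n \<longleftrightarrow> w \<in> primitive_itineraries n"
proof -
  have "w \<noteq> []"
    using assms(1,2) by auto
  have "eta w \<in> Wset n \<longleftrightarrow> \<not> periodic (eta w)"
    using is_word_eta[of w] by (simp add: Wset_def primitive_def assms(1))
  also have "\<dots> \<longleftrightarrow> \<not> (set w \<subseteq> {1, 2} \<or> (\<exists>d. 0 < d \<and> d < length w \<and> rotate d w = w))"
    using periodic_eta_imp[OF _ assms(3)] periodic_eta_if[OF \<open>w \<noteq> []\<close>] by blast
  also have "\<dots> \<longleftrightarrow> w \<in> primitive_itineraries n"
    using assms by (auto simp: primitive_itineraries_def)
  finally show ?thesis .
qed

lemma bij_betw_eta:
  assumes "0 < n"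
  shows "bij_betw eta (primitive_itineraries n) (Wset n)"
  unfolding bij_betw_def
proof
  show "inj_on eta (primitive_itineraries n)"
    using eta_eq_iff by (auto simp: inj_on_def primitive_itineraries_def)
  show "eta ` primitive_itineraries n = Wset n"
  proof (intro subset_antisym image_subsetI subsetI)
    show "eta w \<in> Wset n" if "w \<in> primitive_itineraries n" for w
      using that assms eta_in_Wset_iff[of w n] by (simp add: primitive_itineraries_def)
    fix W assume W: "W \<in> Wset n"
    then have "is_word 2 n W"
      by (simp add: Wset_def)
    then obtain w where "length w = n" "set w \<subseteq> {..<4}" "eta w = W"
      by (rule is_word_2_imp_eta)
    with W assms show "W \<in> eta ` primitive_itineraries n"
      using eta_in_Wset_iff[of w n] by blast
  qed
qed

theorem mainTheorem9:
  fixes n :: nat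
  assumes "n \<ge> 1"
  shows "bij_betw (\<lambda>p. eta (itin n p)) (Tset n) (Wset n)"
proof -
  from assms have "0 < n"
    by simp
  then have "bij_betw (eta \<circ> itin n) (Tset n) (Wset n)"
    using bij_betw_trans[OF bij_betw_itin bij_betw_eta] by blast
  then show ?thesis
    by (simp add: comp_def)
qed

end
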